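(* Let $H$ be the graph consisting of two vertex-disjoint triangles $v_1v_2v_3$ and $w_1w_2w_3$ together with the edge $v_3w_1$. Let $n\ge 7$ and let $G$ be a graph with $n$ vertices obtained from $H$ by attaching $n-6$ pendant edges (new leaves) to vertices of $H$, such that both $v_3$ and $w_1$ are incident with at least one pendant edge. Then $\operatorname{avm}(G)>\operatorname{avm}(T_n^1(3,3))$.
   Context: $\operatorname{avm}(G)$ is the average of $|M|$ over all maximal matchings $M$ of $G$ (a matching is maximal if not properly contained in another matching). $T_n^1(3,3)$ is the graph obtained from $H$ by attaching $n-6$ pendant edges (new leaves) to $v_3$. *)

theory Defs
  imports Complex_Main
begin

text \<open>A simple graph is represented by its edge set: a set of 2-element vertex sets.\<close>

definition is_matching :: "'a set set \<Rightarrow> 'a set set \<Rightarrow> bool" where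
  "is_matching E M \<longleftrightarrow> M \<subseteq> E \<and> (\<forall>e\<in>M. \<forall>e'\<in>M. e \<noteq> e' \<longrightarrow> e \<inter> e' = {})"

definition is_maximal_matching :: "'a set set \<Rightarrow> 'a set set \<Rightarrow> bool" where
  "is_maximal_matching E M \<longleftrightarrow> is_matching E M \<and> \<not> (\<exists>M'. is_matching E M' \<and> M \<subset> M')"

definition maximal_matchings :: "'a set set \<Rightarrow> 'a set set set" where
  "maximal_matchings E = {M. is_maximal_matching E M}"

definition avm :: "'a set set \<Rightarrow> real" where
  "avm E = (\<Sum>M\<in>maximal_matchings E. real (card M)) / real (card (maximal_matchings E))"

text \<open>H: triangles v1 v2 v3 = 0 1 2 and w1 w2 w3 = 3 4 5, plus the edge v3 w1 = {2,3}.\<close>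
definition H_edges :: "nat set set" where
  "H_edges = {{0,1},{1,2},{0,2},{3,4},{4,5},{3,5},{2,3}}"

definition pendant_graph :: "nat \<Rightarrow> (nat \<Rightarrow> nat) \<Rightarrow> nat set set" where
  "pendant_graph n f = H_edges \<union> {{i, f i} | i. i \<in> {6..<n}}"

text \<open>T_n^1(3,3): all n-6 pendant edges attached to v3 (= vertex 2).\<close>
definition T1_33 :: "nat \<Rightarrow> nat set set" where
  "T1_33 n = pendant_graph n (\<lambda>_. 2)"

end

(*
  A maximal matching M of a graph obtained from a base graph E by attaching pendant leaves is
  determined by its base part N = M \<inter> E and by one leaf edge at every leaf-carrying vertex
  ("hub") that N leaves uncovered; N ranges over the matchings of E such that every edge of E
  missed by N touches a hub.  So the number of maximal matchings and the sum of their sizes are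
  sums over such N of products of leaf counts.

  For the base graph H with leaves on both v3 and w1, splitting on whether the bridge v3w1 lies
  in M factors both sums into contributions of the two triangles (checked by enumerating the 20
  matchings of H).  A triangle contributes an average size of at least 3/2 unless its only leaf
  is a single one at the bridge vertex, where the average is 4/3; the other triangle then makes
  up for it with an average of at least 5/3, unless its leaves too all sit at the bridge vertex.
  Hence avm(G) \<ge> 3 > (9m+15)/(3m+7) = avm(T_n^1(3,3)) with m = n - 6, except when all leaves sit
  on v3 and w1 and one of them carries exactly one; then avm(G) = (10m+7)/(3m+4), still larger.
*)

theory Submission
  imports Defs "HOL-Library.FuncSet"
begin

lemma matching_edges_eq:
  assumes "is_matching E M" "e \<in> M" "e' \<in> M" "x \<in> e" "x \<in> e'"
  shows "e = e'"
  using assms unfolding is_matching_def by blast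

lemma maximal_matching_iff:
  assumes "{} \<notin> E"
  shows "is_maximal_matching E M \<longleftrightarrow> is_matching E M \<and> (\<forall>e\<in>E. \<exists>e'\<in>M. e \<inter> e' \<noteq> {})"
proof
  assume max: "is_maximal_matching E M"
  then have M: "is_matching E M" unfolding is_maximal_matching_def by simp
  have "\<exists>e'\<in>M. e \<inter> e' \<noteq> {}" if e: "e \<in> E" for e
  proof (rule ccontr)
    assume disj: "\<not> (\<exists>e'\<in>M. e \<inter> e' \<noteq> {})"
    have "e \<notin> M" using disj e assms by auto
    moreover have "is_matching E (insert e M)"
      using M e disj unfolding is_matching_def by (simp add: Int_commute)
    ultimately show False using max unfolding is_maximal_matching_def by blast
  qed
  with M show "is_matching E M \<and> (\<forall>e\<in>E. \<exists>e'\<in>M. e \<inter> e' \<noteq> {})" by blast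
next
  assume *: "is_matching E M \<and> (\<forall>e\<in>E. \<exists>e'\<in>M. e \<inter> e' \<noteq> {})"
  have False if M': "is_matching E M'" and sub: "M \<subset> M'" for M'
  proof -
    obtain e where e: "e \<in> M'" "e \<notin> M" using sub by blast
    then have "e \<in> E" using M' unfolding is_matching_def by blast
    then obtain e' where e': "e' \<in> M" "e \<inter> e' \<noteq> {}" using * by blast
    then have "e' \<in> M'" "e \<noteq> e'" using sub e by auto
    then show False using M' e(1) e'(2) unfolding is_matching_def by blast
  qed
  with * show "is_maximal_matching E M" unfolding is_maximal_matching_def by blast
qed

lemma is_matching_mono: "is_matching E M \<Longrightarrow> E \<subseteq> E' \<Longrightarrow> is_matching E' M"
  unfolding is_matching_def by blast

lemma is_matching_Un:
  assumes "is_matching E M" "is_matching E M'" "\<Union>M \<inter> \<Union>M' = {}"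
  shows "is_matching E (M \<union> M')"
  unfolding is_matching_def
proof (intro conjI ballI impI)
  show "M \<union> M' \<subseteq> E" using assms(1,2) unfolding is_matching_def by blast
next
  fix e e' assume e: "e \<in> M \<union> M'" and e': "e' \<in> M \<union> M'" and "e \<noteq> e'"
  have cross: "x \<inter> y = {}" if "x \<in> M" "y \<in> M'" for x y
    using that assms(3) by blast
  from e e' consider "e \<in> M" "e' \<in> M" | "e \<in> M" "e' \<in> M'" | "e \<in> M'" "e' \<in> M" | "e \<in> M'" "e' \<in> M'"
    by blast
  then show "e \<inter> e' = {}"
  proof cases
    case 1 then show ?thesis using assms(1) \<open>e \<noteq> e'\<close> unfolding is_matching_def by blast
  next
    case 2 then show ?thesis using cross by blast
  next
    case 3 then show ?thesis using cross[of e' e] by blast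
  next
    case 4 then show ?thesis using assms(2) \<open>e \<noteq> e'\<close> unfolding is_matching_def by blast
  qed
qed

definition attach_leaves :: "'a set set \<Rightarrow> 'a set \<Rightarrow> ('a \<Rightarrow> 'a) \<Rightarrow> 'a set set" where
  "attach_leaves E L f = E \<union> (\<lambda>i. {i, f i}) ` L"

definition leaves_at :: "'a set \<Rightarrow> ('a \<Rightarrow> 'a) \<Rightarrow> 'a \<Rightarrow> 'a set" where
  "leaves_at L f j = {i \<in> L. f i = j}"

text \<open>The possible base parts of maximal matchings, where \<open>S\<close> is the set of hubs.\<close>

definition core_matching :: "'a set set \<Rightarrow> 'a set \<Rightarrow> 'a set set \<Rightarrow> bool" where
  "core_matching E S N \<longleftrightarrow> is_matching E N \<and> (\<forall>e\<in>E. e \<inter> \<Union>N = {} \<longrightarrow> e \<inter> S \<noteq> {})"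

lemma core_matching_subset: "core_matching E S N \<Longrightarrow> N \<subseteq> E"
  unfolding core_matching_def is_matching_def by simp

definition leaf_extension :: "'a set set \<Rightarrow> 'a set \<Rightarrow> ('a \<Rightarrow> 'a) \<Rightarrow> 'a set set" where
  "leaf_extension N U g = N \<union> (\<lambda>j. {g j, j}) ` U"

definition maximal_count :: "'a set set \<Rightarrow> ('a \<Rightarrow> nat) \<Rightarrow> nat" where
  "maximal_count E a = (\<Sum>N\<in>{N. core_matching E {j. a j \<noteq> 0} N}. \<Prod>j\<in>{j. a j \<noteq> 0} - \<Union>N. a j)"

definition maximal_size_sum :: "'a set set \<Rightarrow> ('a \<Rightarrow> nat) \<Rightarrow> nat" where
  "maximal_size_sum E a = (\<Sum>N\<in>{N. core_matching E {j. a j \<noteq> 0} N}.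
     (\<Prod>j\<in>{j. a j \<noteq> 0} - \<Union>N. a j) * (card N + card ({j. a j \<noteq> 0} - \<Union>N)))"

lemma card_leaves_at_eq_0_iff: "finite L \<Longrightarrow> card (leaves_at L f j) = 0 \<longleftrightarrow> j \<notin> f ` L"
  unfolding leaves_at_def by auto

lemma sum_card_leaves_at:
  assumes "finite L" "finite A" "f ` L \<subseteq> A"
  shows "(\<Sum>j\<in>A. card (leaves_at L f j)) = card L"
proof -
  have "L = (\<Union>j\<in>A. leaves_at L f j)" using assms(3) unfolding leaves_at_def by auto
  moreover have "card (\<Union>j\<in>A. leaves_at L f j) = (\<Sum>j\<in>A. card (leaves_at L f j))"
    using assms(1,2) by (intro card_UN_disjoint) (auto simp: leaves_at_def)
  ultimately show ?thesis by simp
qed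

locale leaf_attachment =
  fixes E :: "'a set set" and L :: "'a set" and f :: "'a \<Rightarrow> 'a"
  assumes empty_not_edge: "{} \<notin> E"
    and leaves_off_base: "L \<inter> \<Union>E = {}"
    and hubs_off_leaves: "f ` L \<inter> L = {}"
begin

abbreviation "G \<equiv> attach_leaves E L f"
abbreviation "free_hubs N \<equiv> f ` L - \<Union>N"
abbreviation "extensions N \<equiv> leaf_extension N (free_hubs N) ` (\<Pi>\<^sub>E j\<in>free_hubs N. leaves_at L f j)"

lemma empty_notin_G: "{} \<notin> G"
  using empty_not_edge unfolding attach_leaves_def by auto

lemma leaf_notin_base_edge: "i \<in> L \<Longrightarrow> e \<in> E \<Longrightarrow> i \<notin> e"
  using leaves_off_base by blast

lemma hub_notin_leaves: "i \<in> L \<Longrightarrow> f i \<notin> L"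
  using hubs_off_leaves by blast

lemma core_matching_of_maximal:
  assumes "is_maximal_matching G M"
  shows "core_matching E (f ` L) (M \<inter> E)"
  unfolding core_matching_def
proof
  have M: "is_matching G M" "\<forall>e\<in>G. \<exists>e'\<in>M. e \<inter> e' \<noteq> {}"
    using assms maximal_matching_iff[OF empty_notin_G] by auto
  then show "is_matching E (M \<inter> E)" unfolding is_matching_def by blast
  show "\<forall>e\<in>E. e \<inter> \<Union>(M \<inter> E) = {} \<longrightarrow> e \<inter> f ` L \<noteq> {}"
  proof (intro ballI impI)
    fix e assume e: "e \<in> E" "e \<inter> \<Union>(M \<inter> E) = {}"
    obtain e' where e': "e' \<in> M" "e \<inter> e' \<noteq> {}"
      using M(2) e(1) unfolding attach_leaves_def by blast
    have "e' \<notin> E" using e e' by blast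
    moreover have "e' \<in> G" using M(1) e'(1) unfolding is_matching_def by blast
    ultimately obtain i where i: "i \<in> L" "e' = {i, f i}"
      unfolding attach_leaves_def by blast
    have "i \<notin> e" using leaf_notin_base_edge[OF i(1) e(1)] .
    then have "f i \<in> e" using e'(2) i(2) by blast
    then show "e \<inter> f ` L \<noteq> {}" using i(1) by blast
  qed
qed

lemma free_hub_matched_to_leaf:
  assumes "is_maximal_matching G M" "j \<in> free_hubs (M \<inter> E)"
  shows "\<exists>i\<in>leaves_at L f j. {i, j} \<in> M"
proof -
  have M: "is_matching G M" "\<forall>e\<in>G. \<exists>e'\<in>M. e \<inter> e' \<noteq> {}"
    using assms(1) maximal_matching_iff[OF empty_notin_G] by auto
  obtain i where i: "i \<in> L" "f i = j" using assms(2) by blast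
  then obtain e' where "e' \<in> M" "{i, j} \<inter> e' \<noteq> {}"
    using M(2) unfolding attach_leaves_def by blast
  moreover have "e' \<in> G" using M(1) \<open>e' \<in> M\<close> unfolding is_matching_def by blast
  moreover have "e' \<notin> E"
  proof
    assume "e' \<in> E"
    then have "j \<notin> e'" "i \<notin> e'"
      using assms(2) \<open>e' \<in> M\<close> leaf_notin_base_edge[OF i(1)] by blast+
    then show False using \<open>{i, j} \<inter> e' \<noteq> {}\<close> by blast
  qed
  ultimately obtain i' where i': "i' \<in> L" "e' = {i', f i'}" "{i, j} \<inter> {i', f i'} \<noteq> {}"
    unfolding attach_leaves_def by blast
  have "i \<noteq> f i'" "j \<noteq> i'" using i i' hub_notin_leaves by blast+
  then have "f i' = j" using i i'(3) by auto
  then show ?thesis using i'(1,2) \<open>e' \<in> M\<close> unfolding leaves_at_def by auto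
qed

lemma leaf_edge_hub_free:
  assumes M: "is_matching G M" and "i \<in> L" "{i, f i} \<in> M"
  shows "f i \<notin> \<Union>(M \<inter> E)"
proof
  assume "f i \<in> \<Union>(M \<inter> E)"
  then obtain e where e: "e \<in> M" "e \<in> E" "f i \<in> e" by blast
  have "e = {i, f i}" using matching_edges_eq[OF M e(1) assms(3) e(3)] by simp
  then show False using e(2) leaf_notin_base_edge[OF \<open>i \<in> L\<close>] by blast
qed

lemma maximal_matching_eq_leaf_extension:
  assumes "is_maximal_matching G M"
  obtains g where "g \<in> (\<Pi>\<^sub>E j\<in>free_hubs (M \<inter> E). leaves_at L f j)"
    and "M = leaf_extension (M \<inter> E) (free_hubs (M \<inter> E)) g"
proof -
  let ?N = "M \<inter> E" and ?U = "free_hubs (M \<inter> E)"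
  have M: "is_matching G M" using assms unfolding is_maximal_matching_def by simp
  have "\<forall>j\<in>?U. \<exists>i. i \<in> leaves_at L f j \<and> {i, j} \<in> M"
    using free_hub_matched_to_leaf[OF assms] by blast
  from bchoice[OF this] obtain g where g: "\<forall>j\<in>?U. g j \<in> leaves_at L f j \<and> {g j, j} \<in> M" ..
  have "M = leaf_extension ?N ?U (restrict g ?U)"
  proof (intro equalityI subsetI)
    fix e assume "e \<in> M"
    show "e \<in> leaf_extension ?N ?U (restrict g ?U)"
    proof (cases "e \<in> E")
      case True then show ?thesis using \<open>e \<in> M\<close> unfolding leaf_extension_def by blast
    next
      case False
      have "e \<in> G" using M \<open>e \<in> M\<close> unfolding is_matching_def by blast
      then obtain i where i: "i \<in> L" "e = {i, f i}"
        using False unfolding attach_leaves_def by blast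
      have "f i \<notin> \<Union>?N" using leaf_edge_hub_free[OF M] i \<open>e \<in> M\<close> by blast
      then have U: "f i \<in> ?U" using i(1) by blast
      have "{g (f i), f i} = e"
        using matching_edges_eq[OF M conjunct2[OF bspec[OF g U]] \<open>e \<in> M\<close>, of "f i"] i(2) by simp
      then have "e = (\<lambda>j. {restrict g ?U j, j}) (f i)" using U by simp
      then show ?thesis using U unfolding leaf_extension_def by blast
    qed
  next
    fix e assume "e \<in> leaf_extension ?N ?U (restrict g ?U)"
    then consider "e \<in> ?N" | j where "j \<in> ?U" "e = {g j, j}"
      unfolding leaf_extension_def by auto
    then show "e \<in> M" using g by cases auto
  qed
  moreover have "restrict g ?U \<in> (\<Pi>\<^sub>E j\<in>?U. leaves_at L f j)" using g by auto
  ultimately show thesis using that by blast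
qed

lemma leaf_edges_matching:
  assumes g: "g \<in> (\<Pi>\<^sub>E j\<in>U. leaves_at L f j)"
  shows "is_matching G ((\<lambda>j. {g j, j}) ` U)"
proof -
  have gj: "g j \<in> L" "f (g j) = j" if "j \<in> U" for j
    using g that unfolding leaves_at_def by auto
  have leaf_edge: "{g j, j} \<in> G" if "j \<in> U" for j
  proof -
    have "{g j, j} = (\<lambda>i. {i, f i}) (g j)" using gj[OF that] by simp
    then show ?thesis using gj(1)[OF that] unfolding attach_leaves_def by blast
  qed
  have leaf_disj: "{g j, j} \<inter> {g k, k} = {}" if "j \<in> U" "k \<in> U" "j \<noteq> k" for j k
  proof -
    have "g j \<noteq> g k" using gj(2)[OF that(1)] gj(2)[OF that(2)] that(3) by metis
    moreover have "g j \<noteq> k" "j \<noteq> g k"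
      using gj[OF that(1)] gj[OF that(2)] hub_notin_leaves by metis+
    ultimately show ?thesis using that(3) by simp
  qed
  show ?thesis unfolding is_matching_def
  proof (intro conjI ballI impI)
    show "(\<lambda>j. {g j, j}) ` U \<subseteq> G" by (rule image_subsetI) (rule leaf_edge)
  next
    fix e e' assume e: "e \<in> (\<lambda>j. {g j, j}) ` U" and e': "e' \<in> (\<lambda>j. {g j, j}) ` U" and "e \<noteq> e'"
    obtain j where j: "j \<in> U" "e = {g j, j}" using e by (rule imageE) simp
    obtain k where k: "k \<in> U" "e' = {g k, k}" using e' by (rule imageE) simp
    have "j \<noteq> k" using \<open>e \<noteq> e'\<close> j(2) k(2) by auto
    then show "e \<inter> e' = {}" using leaf_disj[OF j(1) k(1)] j(2) k(2) by simp
  qed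
qed

lemma leaf_extension_matching:
  assumes N: "is_matching E N" and g: "g \<in> (\<Pi>\<^sub>E j\<in>U. leaves_at L f j)" and "U \<inter> \<Union>N = {}"
  shows "is_matching G (leaf_extension N U g)"
  unfolding leaf_extension_def
proof (rule is_matching_Un)
  show "is_matching G N"
    using is_matching_mono[OF N] unfolding attach_leaves_def by simp
  show "is_matching G ((\<lambda>j. {g j, j}) ` U)" using g by (rule leaf_edges_matching)
  have "\<Union>N \<subseteq> \<Union>E" using N unfolding is_matching_def by (rule conjE) (rule Union_mono)
  moreover have "g j \<in> L" if "j \<in> U" for j using g that unfolding leaves_at_def by auto
  ultimately have "g ` U \<inter> \<Union>N = {}" using leaves_off_base by blast
  moreover have "\<Union>((\<lambda>j. {g j, j}) ` U) = g ` U \<union> U" by auto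
  ultimately show "\<Union>N \<inter> \<Union>((\<lambda>j. {g j, j}) ` U) = {}" using assms(3) by auto
qed

lemma leaf_extension_maximal:
  assumes N: "core_matching E (f ` L) N"
    and g: "g \<in> (\<Pi>\<^sub>E j\<in>free_hubs N. leaves_at L f j)"
  shows "is_maximal_matching G (leaf_extension N (free_hubs N) g)"
proof -
  let ?U = "free_hubs N" and ?M = "leaf_extension N (free_hubs N) g"
  have NE: "is_matching E N" and hub: "\<And>e. e \<in> E \<Longrightarrow> e \<inter> \<Union>N = {} \<Longrightarrow> e \<inter> f ` L \<noteq> {}"
    using N unfolding core_matching_def by auto
  have M: "is_matching G ?M" by (rule leaf_extension_matching[OF NE g]) blast
  have hub_covered: "\<exists>e'\<in>?M. j \<in> e'" if j: "j \<in> f ` L" for j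
  proof (cases "j \<in> \<Union>N")
    case True
    then obtain e' where "e' \<in> N" "j \<in> e'" by (rule UnionE)
    then show ?thesis unfolding leaf_extension_def by blast
  next
    case False
    then have "j \<in> ?U" using j by (rule DiffI[rotated])
    then have "{g j, j} \<in> ?M" unfolding leaf_extension_def by (intro UnI2 imageI)
    then show ?thesis by blast
  qed
  have "\<exists>e'\<in>?M. e \<inter> e' \<noteq> {}" if eG: "e \<in> G" for e
  proof (cases "e \<in> E \<and> e \<inter> \<Union>N \<noteq> {}")
    case True
    then obtain x e' where "x \<in> e" "e' \<in> N" "x \<in> e'" by blast
    then show ?thesis unfolding leaf_extension_def by blast
  next
    case False
    have "e \<inter> f ` L \<noteq> {}"
    proof (cases "e \<in> E")
      case True then show ?thesis using False hub by blast
    next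
      case False
      then obtain i where "i \<in> L" "e = {i, f i}" using eG unfolding attach_leaves_def by blast
      then show ?thesis by blast
    qed
    then obtain j where "j \<in> e" "j \<in> f ` L" by blast
    then show ?thesis using hub_covered by blast
  qed
  with M show ?thesis unfolding maximal_matching_iff[OF empty_notin_G] by blast
qed

lemma leaf_edge_notin_base:
  "g \<in> (\<Pi>\<^sub>E j\<in>U. leaves_at L f j) \<Longrightarrow> j \<in> U \<Longrightarrow> {g j, j} \<notin> E"
  using leaf_notin_base_edge unfolding leaves_at_def by blast

lemma leaf_extension_inter_base:
  "N \<subseteq> E \<Longrightarrow> g \<in> (\<Pi>\<^sub>E j\<in>U. leaves_at L f j) \<Longrightarrow> leaf_extension N U g \<inter> E = N"
  using leaf_edge_notin_base unfolding leaf_extension_def by blast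

lemma leaf_edge_eqD:
  assumes "g \<in> (\<Pi>\<^sub>E j\<in>U. leaves_at L f j)" "g' \<in> (\<Pi>\<^sub>E j\<in>U. leaves_at L f j)"
    and "j \<in> U" "k \<in> U" "{g j, j} = {g' k, k}"
  shows "j = k" "g j = g' k"
proof -
  have "g j \<in> L" "g' k \<in> L" "f (g j) = j" "f (g' k) = k"
    using assms(1-4) unfolding leaves_at_def by auto
  then have "j \<notin> L" "k \<notin> L" using hub_notin_leaves by metis+
  with assms(5) \<open>g j \<in> L\<close> \<open>g' k \<in> L\<close> show "j = k" "g j = g' k"
    by (auto simp: doubleton_eq_iff)
qed

lemma inj_on_leaf_extension:
  assumes "N \<subseteq> E"
  shows "inj_on (leaf_extension N U) (\<Pi>\<^sub>E j\<in>U. leaves_at L f j)"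
proof (rule inj_onI)
  fix g g' assume g: "g \<in> (\<Pi>\<^sub>E j\<in>U. leaves_at L f j)" and g': "g' \<in> (\<Pi>\<^sub>E j\<in>U. leaves_at L f j)"
    and eq: "leaf_extension N U g = leaf_extension N U g'"
  show "g = g'"
  proof (rule PiE_ext[OF g g'])
    fix j assume j: "j \<in> U"
    have "{g j, j} \<notin> E" using leaf_edge_notin_base[OF g j] .
    moreover have "{g j, j} \<in> leaf_extension N U g'"
      using eq j unfolding leaf_extension_def by blast
    ultimately obtain k where "k \<in> U" "{g j, j} = {g' k, k}"
      using assms unfolding leaf_extension_def by blast
    then show "g j = g' j" using leaf_edge_eqD[OF g g' j] by metis
  qed
qed

lemma card_leaf_extension:
  assumes "finite N" "N \<subseteq> E" "finite U" "g \<in> (\<Pi>\<^sub>E j\<in>U. leaves_at L f j)"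
  shows "card (leaf_extension N U g) = card N + card U"
proof -
  have "inj_on (\<lambda>j. {g j, j}) U"
    using leaf_edge_eqD[OF assms(4) assms(4)] by (auto intro: inj_onI)
  moreover have "N \<inter> (\<lambda>j. {g j, j}) ` U = {}"
    using leaf_edge_notin_base[OF assms(4)] assms(2) by blast
  ultimately show ?thesis
    unfolding leaf_extension_def using assms(1,3) by (simp add: card_Un_disjoint card_image)
qed

lemma maximal_matchings_eq:
  "maximal_matchings G = (\<Union>N\<in>{N. core_matching E (f ` L) N}. extensions N)"
proof (intro equalityI subsetI)
  fix M assume "M \<in> maximal_matchings G"
  then have M: "is_maximal_matching G M" unfolding maximal_matchings_def by simp
  obtain g where "g \<in> (\<Pi>\<^sub>E j\<in>free_hubs (M \<inter> E). leaves_at L f j)"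
    and "M = leaf_extension (M \<inter> E) (free_hubs (M \<inter> E)) g"
    using maximal_matching_eq_leaf_extension[OF M] .
  then show "M \<in> (\<Union>N\<in>{N. core_matching E (f ` L) N}. extensions N)"
    using core_matching_of_maximal[OF M] by blast
next
  fix M assume "M \<in> (\<Union>N\<in>{N. core_matching E (f ` L) N}. extensions N)"
  then obtain N g where N: "core_matching E (f ` L) N"
    and g: "g \<in> (\<Pi>\<^sub>E j\<in>free_hubs N. leaves_at L f j)" and M: "M = leaf_extension N (free_hubs N) g"
    by blast
  show "M \<in> maximal_matchings G"
    unfolding maximal_matchings_def M using leaf_extension_maximal[OF N g] by (rule CollectI)
qed

lemma extensions_disjoint:
  assumes "core_matching E (f ` L) N" "core_matching E (f ` L) N'" "N \<noteq> N'"
  shows "extensions N \<inter> extensions N' = {}"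
proof -
  have base: "M \<inter> E = N" if N: "core_matching E (f ` L) N" and M: "M \<in> extensions N" for M N
  proof -
    have "N \<subseteq> E" using N by (rule core_matching_subset)
    from M obtain g where "g \<in> (\<Pi>\<^sub>E j\<in>free_hubs N. leaves_at L f j)" "M = leaf_extension N (free_hubs N) g"
      by (rule imageE)
    then show ?thesis using leaf_extension_inter_base[OF \<open>N \<subseteq> E\<close>] by simp
  qed
  show ?thesis using base[OF assms(1)] base[OF assms(2)] assms(3) by blast
qed

context
  assumes finite_base: "finite E" and finite_leaves: "finite L"
begin

lemma finite_cores: "finite {N. core_matching E (f ` L) N}"
  by (rule finite_subset[of _ "Pow E"]) (auto simp: core_matching_def is_matching_def finite_base)

lemma finite_extensions: "finite (extensions N)"
  using finite_leaves unfolding leaves_at_def by (intro finite_imageI finite_PiE) auto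

lemma card_extensions:
  "card (extensions N) = (\<Prod>j\<in>free_hubs N. card (leaves_at L f j))" if "core_matching E (f ` L) N"
proof -
  have "N \<subseteq> E" using that by (rule core_matching_subset)
  then show ?thesis
    using finite_leaves by (simp add: card_image[OF inj_on_leaf_extension] card_PiE)
qed

lemma hubs_eq_support: "f ` L = {j. card (leaves_at L f j) \<noteq> 0}"
  by (simp add: set_eq_iff card_leaves_at_eq_0_iff[OF finite_leaves])

theorem card_maximal_matchings:
  "card (maximal_matchings G) = maximal_count E (\<lambda>j. card (leaves_at L f j))"
  unfolding maximal_matchings_eq maximal_count_def hubs_eq_support[symmetric]
  by (simp add: card_UN_disjoint[OF finite_cores] finite_extensions extensions_disjoint card_extensions)

theorem sum_card_maximal_matchings:
  "(\<Sum>M\<in>maximal_matchings G. card M) = maximal_size_sum E (\<lambda>j. card (leaves_at L f j))"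
proof -
  have "(\<Sum>M\<in>extensions N. card M) = card (extensions N) * (card N + card (free_hubs N))"
    if N: "core_matching E (f ` L) N" for N
  proof -
    have "N \<subseteq> E" using N by (rule core_matching_subset)
    moreover have "finite N" using \<open>N \<subseteq> E\<close> finite_base finite_subset by blast
    ultimately have "card M = card N + card (free_hubs N)" if "M \<in> extensions N" for M
      using that card_leaf_extension finite_leaves by auto
    then show ?thesis by simp
  qed
  then show ?thesis
    unfolding maximal_matchings_eq maximal_size_sum_def hubs_eq_support[symmetric]
    by (simp add: sum.UNION_disjoint[OF finite_cores] finite_extensions extensions_disjoint card_extensions)
qed

theorem avm_attach_leaves:
  "avm G = maximal_size_sum E (\<lambda>j. card (leaves_at L f j)) / maximal_count E (\<lambda>j. card (leaves_at L f j))"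
  unfolding avm_def card_maximal_matchings sum_card_maximal_matchings[symmetric] by simp

end

end

lemma pendant_graph_eq: "pendant_graph n f = attach_leaves H_edges {6..<n} f"
  unfolding pendant_graph_def attach_leaves_def by auto

lemma leaf_attachment_H:
  assumes "f ` {6..<n} \<subseteq> {0,1,2,3,4,5}"
  shows "leaf_attachment H_edges {6..<n} f"
  using assms unfolding leaf_attachment_def H_edges_def by auto

lemma avm_pendant_graph:
  assumes "f ` {6..<n} \<subseteq> {0,1,2,3,4,5}"
  shows "avm (pendant_graph n f) = maximal_size_sum H_edges (\<lambda>j. card (leaves_at {6..<n} f j))
    / maximal_count H_edges (\<lambda>j. card (leaves_at {6..<n} f j))"
proof -
  interpret leaf_attachment H_edges "{6..<n}" f using leaf_attachment_H[OF assms] .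
  show ?thesis unfolding pendant_graph_eq
    by (rule avm_attach_leaves) (simp_all add: H_edges_def)
qed

definition H_matchings :: "nat set set list" where
  "H_matchings = [{}, {{0,1}}, {{1,2}}, {{0,2}}, {{3,4}}, {{4,5}}, {{3,5}}, {{2,3}},
    {{0,1},{3,4}}, {{0,1},{4,5}}, {{0,1},{3,5}}, {{0,1},{2,3}}, {{1,2},{3,4}}, {{1,2},{4,5}},
    {{1,2},{3,5}}, {{0,2},{3,4}}, {{0,2},{4,5}}, {{0,2},{3,5}}, {{4,5},{2,3}}, {{0,1},{4,5},{2,3}}]"

lemma distinct_H_matchings: "distinct H_matchings"
  unfolding H_matchings_def by (simp add: doubleton_eq_iff insert_eq_iff)

lemma H_edges_eq_set: "H_edges = set [{0,1},{1,2},{0,2},{3,4},{4,5},{3,5},{2,3}]"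
  unfolding H_edges_def by simp

lemma set_H_matchings: "set H_matchings = {N. is_matching H_edges N}"
proof (intro equalityI subsetI; clarify)
  fix N assume "N \<in> set H_matchings"
  then show "is_matching H_edges N"
    unfolding H_matchings_def is_matching_def H_edges_def by (auto simp: doubleton_eq_iff)
next
  fix N assume N: "is_matching H_edges N"
  then have "N \<in> set ` set (subseqs [{0,1},{1,2},{0,2},{3,4},{4,5},{3,5},{2,3}])"
    unfolding subseqs_powset H_edges_eq_set[symmetric] is_matching_def by blast
  then show "N \<in> set H_matchings"
    using N unfolding H_matchings_def is_matching_def H_edges_def
    by (simp add: Let_def) (elim disjE; simp add: doubleton_eq_iff insert_commute)
qed

lemma sum_core_matchings_H:
  "(\<Sum>N\<in>{N. core_matching H_edges S N}. F N) =
    (\<Sum>N\<leftarrow>H_matchings. if \<forall>e\<in>H_edges. e \<inter> \<Union>N = {} \<longrightarrow> e \<inter> S \<noteq> {} then F N else 0)"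
proof -
  have "{N. core_matching H_edges S N} = {N \<in> set H_matchings. \<forall>e\<in>H_edges. e \<inter> \<Union>N = {} \<longrightarrow> e \<inter> S \<noteq> {}}"
    unfolding core_matching_def set_H_matchings by blast
  then show ?thesis
    by (simp add: sum.inter_filter sum_list_distinct_conv_sum_set[OF distinct_H_matchings])
qed

lemma prod_nonzero_eq:
  assumes "finite A" "{j. a j \<noteq> 0} \<subseteq> A"
  shows "(\<Prod>j\<in>{j. a j \<noteq> 0} - V. a j) = (\<Prod>j\<in>A - V. max 1 (a j :: nat))"
  by (rule prod.mono_neutral_cong_left) (use assms in auto)

lemma card_nonzero_eq:
  assumes "finite A" "{j. a j \<noteq> 0} \<subseteq> A"
  shows "card ({j. a j \<noteq> 0} - V) = (\<Sum>j\<in>A - V. of_bool (a j \<noteq> (0::nat)))"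
  unfolding card_eq_sum by (rule sum.mono_neutral_cong_left) (use assms in auto)

lemma maximal_count_H_sum_list:
  assumes "{j. a j \<noteq> 0} \<subseteq> {0,1,2,3,4,5}"
  shows "maximal_count H_edges a = (\<Sum>N\<leftarrow>H_matchings.
    if \<forall>e\<in>H_edges. e \<inter> \<Union>N = {} \<longrightarrow> e \<inter> {j. a j \<noteq> 0} \<noteq> {}
    then \<Prod>j\<in>{0,1,2,3,4,5} - \<Union>N. max 1 (a j) else 0)"
  unfolding maximal_count_def sum_core_matchings_H
  by (simp only: prod_nonzero_eq[OF _ assms] finite.emptyI finite_insert)

lemma maximal_size_sum_H_sum_list:
  assumes "{j. a j \<noteq> 0} \<subseteq> {0,1,2,3,4,5}"
  shows "maximal_size_sum H_edges a = (\<Sum>N\<leftarrow>H_matchings.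
    if \<forall>e\<in>H_edges. e \<inter> \<Union>N = {} \<longrightarrow> e \<inter> {j. a j \<noteq> 0} \<noteq> {}
    then (\<Prod>j\<in>{0,1,2,3,4,5} - \<Union>N. max 1 (a j))
      * (card N + (\<Sum>j\<in>{0,1,2,3,4,5} - \<Union>N. of_bool (a j \<noteq> 0)))
    else 0)"
  unfolding maximal_size_sum_def sum_core_matchings_H
  by (simp only: prod_nonzero_eq[OF _ assms] card_nonzero_eq[OF _ assms] finite.emptyI finite_insert)

text \<open>Consider a triangle of \<open>H\<close> carrying \<open>x\<close>, \<open>y\<close> and \<open>c > 0\<close> leaves, the \<open>c\<close> leaves
  sitting at the end of the bridge.  Over the maximal matchings of \<open>G\<close> avoiding the bridge, the
  parts inside the triangle and its leaves are counted by \<open>triangle_count x y c\<close>, their sizes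
  summed by \<open>triangle_size_sum x y c\<close>; over those containing the bridge, \<open>edge_count x y\<close> and
  \<open>edge_size_sum x y\<close> do the same for the opposite edge and its leaves.\<close>

definition edge_count :: "nat \<Rightarrow> nat \<Rightarrow> nat" where
  "edge_count x y = 1 + of_bool (x \<noteq> 0 \<or> y \<noteq> 0) * (max 1 x * max 1 y)"

definition edge_size_sum :: "nat \<Rightarrow> nat \<Rightarrow> nat" where
  "edge_size_sum x y =
    1 + of_bool (x \<noteq> 0 \<or> y \<noteq> 0) * (max 1 x * max 1 y * (of_bool (x \<noteq> 0) + of_bool (y \<noteq> 0)))"

definition triangle_count :: "nat \<Rightarrow> nat \<Rightarrow> nat \<Rightarrow> nat" where
  "triangle_count x y c = c * edge_count x y + max 1 x + max 1 y"

definition triangle_size_sum :: "nat \<Rightarrow> nat \<Rightarrow> nat \<Rightarrow> nat" where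
  "triangle_size_sum x y c = c * (edge_count x y + edge_size_sum x y)
     + max 1 x * (1 + of_bool (x \<noteq> 0)) + max 1 y * (1 + of_bool (y \<noteq> 0))"

lemma maximal_count_H_bridge:
  assumes "{j. a j \<noteq> 0} \<subseteq> {0,1,2,3,4,5}" "a 2 \<noteq> 0" "a 3 \<noteq> 0"
  shows "maximal_count H_edges a =
    triangle_count (a 0) (a 1) (a 2) * triangle_count (a 4) (a 5) (a 3)
    + edge_count (a 0) (a 1) * edge_count (a 4) (a 5)"
  unfolding maximal_count_H_sum_list[OF assms(1)]
  unfolding H_matchings_def H_edges_def triangle_count_def edge_count_def
  using assms(2,3)
  by (cases "a 0 = 0"; cases "a 1 = 0"; cases "a 4 = 0"; cases "a 5 = 0")
    (simp_all add: insert_Diff_if algebra_simps)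

lemma maximal_size_sum_H_bridge:
  assumes "{j. a j \<noteq> 0} \<subseteq> {0,1,2,3,4,5}" "a 2 \<noteq> 0" "a 3 \<noteq> 0"
  shows "maximal_size_sum H_edges a =
    triangle_size_sum (a 0) (a 1) (a 2) * triangle_count (a 4) (a 5) (a 3)
    + triangle_count (a 0) (a 1) (a 2) * triangle_size_sum (a 4) (a 5) (a 3)
    + (edge_size_sum (a 0) (a 1) + edge_count (a 0) (a 1)) * edge_count (a 4) (a 5)
    + edge_count (a 0) (a 1) * edge_size_sum (a 4) (a 5)"
  unfolding maximal_size_sum_H_sum_list[OF assms(1)]
  unfolding H_matchings_def H_edges_def triangle_count_def triangle_size_sum_def
    edge_count_def edge_size_sum_def
  using assms(2,3)
  by (cases "a 0 = 0"; cases "a 1 = 0"; cases "a 4 = 0"; cases "a 5 = 0")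
    (simp_all add: insert_Diff_if doubleton_eq_iff algebra_simps)

lemma maximal_count_size_sum_H_single_hub:
  assumes "{j. a j \<noteq> 0} = {2}"
  shows "maximal_count H_edges a = 3 * a 2 + 7" "maximal_size_sum H_edges a = 9 * a 2 + 15"
proof -
  have zero: "a j = 0" if "j \<noteq> 2" for j using assms that by blast
  have "a 0 = 0" "a 1 = 0" "a 3 = 0" "a 4 = 0" "a 5 = 0" using zero by simp_all
  moreover have "a 2 \<noteq> 0" using assms by blast
  moreover have supp: "{j. a j \<noteq> 0} \<subseteq> {0,1,2,3,4,5}" using assms by simp
  ultimately show "maximal_count H_edges a = 3 * a 2 + 7" "maximal_size_sum H_edges a = 9 * a 2 + 15"
    unfolding maximal_count_H_sum_list[OF supp] maximal_size_sum_H_sum_list[OF supp]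
    unfolding H_matchings_def H_edges_def by (simp_all add: insert_Diff_if doubleton_eq_iff)
qed

lemma edge_count_le_size_sum: "edge_count x y \<le> edge_size_sum x y"
  unfolding edge_count_def edge_size_sum_def by auto

lemma triangle_avg_ge_three_halves:
  assumes "c \<noteq> 0" "\<not> (x = 0 \<and> y = 0 \<and> c = 1)"
  shows "3 * triangle_count x y c \<le> 2 * triangle_size_sum x y c"
  using assms unfolding triangle_count_def triangle_size_sum_def edge_count_def edge_size_sum_def
  by (cases "x = 0"; cases "y = 0") (auto simp: algebra_simps)

lemma triangle_avg_ge_five_thirds:
  assumes "c \<noteq> 0" "x \<noteq> 0 \<or> y \<noteq> 0"
  shows "5 * triangle_count x y c \<le> 3 * triangle_size_sum x y c"
  using assms unfolding triangle_count_def triangle_size_sum_def edge_count_def edge_size_sum_def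
  by (cases "x = 0"; cases "y = 0") (auto simp: algebra_simps)

lemma bare_triangle:
  "triangle_count 0 0 c = c + 2" "triangle_size_sum 0 0 c = 2 * c + 2"
  "edge_count 0 0 = 1" "edge_size_sum 0 0 = 1"
  unfolding triangle_count_def triangle_size_sum_def edge_count_def edge_size_sum_def by simp_all

lemma triangle_count_pos: "0 < triangle_count x y c"
  unfolding triangle_count_def by (simp add: less_max_iff_disj)

lemma bridge_avg_ge_three:
  fixes l r l' r' ls rs ls' rs' :: nat
  assumes "l' \<le> ls'" "r' \<le> rs'"
    and "3 * l \<le> 2 * ls \<and> 3 * r \<le> 2 * rs
      \<or> l = 3 \<and> ls = 4 \<and> l' = 1 \<and> 5 * r \<le> 3 * rs
      \<or> r = 3 \<and> rs = 4 \<and> r' = 1 \<and> 5 * l \<le> 3 * ls"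
  shows "3 * (l * r + l' * r') \<le> ls * r + l * rs + (ls' + l') * r' + l' * rs'"
proof -
  have base: "l' * r' \<le> ls' * r'" "l' * r' \<le> l' * rs'"
    using assms(1,2) by (simp_all add: mult_right_mono mult_left_mono)
  from assms(3) consider
      "3 * l \<le> 2 * ls" "3 * r \<le> 2 * rs"
    | "l = 3" "ls = 4" "l' = 1" "5 * r \<le> 3 * rs"
    | "r = 3" "rs = 4" "r' = 1" "5 * l \<le> 3 * ls"
    by blast
  then show ?thesis
  proof cases
    case 1
    have "3 * (l * r) \<le> 2 * (ls * r)" "3 * (l * r) \<le> 2 * (l * rs)"
      using mult_right_mono[OF 1(1), of r] mult_left_mono[OF 1(2), of l] by (simp_all add: ac_simps)
    then show ?thesis using base by (simp only: distrib_left distrib_right)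
  next
    case 2
    have "r' \<le> ls' * r'" using base(1) 2(3) by simp
    then show ?thesis using 2(4) assms(2)
      by (simp only: 2(1-3) distrib_left distrib_right mult_1_left)
  next
    case 3
    have "l' \<le> l' * rs'" using base(2) 3(3) by simp
    then show ?thesis using 3(4) assms(1)
      by (simp only: 3(1-3) distrib_left distrib_right mult_1_right)
  qed
qed

lemma maximal_avg_H_ge_three:
  assumes "{j. a j \<noteq> 0} \<subseteq> {0,1,2,3,4,5}" "a 2 \<noteq> 0" "a 3 \<noteq> 0"
    and "\<not> (a 0 = 0 \<and> a 1 = 0 \<and> a 4 = 0 \<and> a 5 = 0 \<and> (a 2 = 1 \<or> a 3 = 1))"
  shows "3 * maximal_count H_edges a \<le> maximal_size_sum H_edges a"
proof -
  let ?l = "triangle_count (a 0) (a 1) (a 2)" and ?ls = "triangle_size_sum (a 0) (a 1) (a 2)"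
    and ?r = "triangle_count (a 4) (a 5) (a 3)" and ?rs = "triangle_size_sum (a 4) (a 5) (a 3)"
  let ?bare_l = "a 0 = 0 \<and> a 1 = 0 \<and> a 2 = 1" and ?bare_r = "a 4 = 0 \<and> a 5 = 0 \<and> a 3 = 1"
  consider "\<not> ?bare_l" "\<not> ?bare_r" | "?bare_l" "a 4 \<noteq> 0 \<or> a 5 \<noteq> 0" | "?bare_r" "a 0 \<noteq> 0 \<or> a 1 \<noteq> 0"
    using assms(4) by (cases ?bare_l; cases ?bare_r) auto
  then have "3 * ?l \<le> 2 * ?ls \<and> 3 * ?r \<le> 2 * ?rs
    \<or> ?l = 3 \<and> ?ls = 4 \<and> edge_count (a 0) (a 1) = 1 \<and> 5 * ?r \<le> 3 * ?rs
    \<or> ?r = 3 \<and> ?rs = 4 \<and> edge_count (a 4) (a 5) = 1 \<and> 5 * ?l \<le> 3 * ?ls"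
  proof cases
    case 1 then show ?thesis using triangle_avg_ge_three_halves assms(2,3) by blast
  next
    case 2 then show ?thesis using triangle_avg_ge_five_thirds assms(3) by (simp add: bare_triangle)
  next
    case 3 then show ?thesis using triangle_avg_ge_five_thirds assms(2) by (simp add: bare_triangle)
  qed
  then show ?thesis
    unfolding maximal_count_H_bridge[OF assms(1-3)] maximal_size_sum_H_bridge[OF assms(1-3)]
    by (rule bridge_avg_ge_three[OF edge_count_le_size_sum edge_count_le_size_sum])
qed

lemma maximal_count_size_sum_H_exceptional:
  assumes "{j. a j \<noteq> 0} \<subseteq> {0,1,2,3,4,5}" "a 2 \<noteq> 0" "a 3 \<noteq> 0"
    and "a 0 = 0" "a 1 = 0" "a 4 = 0" "a 5 = 0" "a 2 = 1 \<or> a 3 = 1"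
  shows "maximal_count H_edges a = 3 * (a 2 + a 3) + 4"
    and "maximal_size_sum H_edges a = 10 * (a 2 + a 3) + 7"
  unfolding maximal_count_H_bridge[OF assms(1-3)] maximal_size_sum_H_bridge[OF assms(1-3)]
  using assms(4-8) by (auto simp: bare_triangle)

lemma avm_T1_33:
  assumes "n \<ge> 7"
  shows "avm (T1_33 n) = real (9 * (n - 6) + 15) / real (3 * (n - 6) + 7)"
proof -
  have "leaves_at {6..<n} (\<lambda>_. 2) j = (if j = 2 then {6..<n} else {})" for j
    unfolding leaves_at_def by auto
  then have leaves: "card (leaves_at {6..<n} (\<lambda>_. 2) j) = (if j = 2 then n - 6 else 0)" for j
    by simp
  then have "{j. card (leaves_at {6..<n} (\<lambda>_. 2) j) \<noteq> 0} = {2}" using assms by auto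
  moreover have "(\<lambda>_. 2) ` {6..<n} \<subseteq> {0,1,2,3,4,5}" by auto
  ultimately show ?thesis
    unfolding T1_33_def avm_pendant_graph[OF \<open>(\<lambda>_. 2) ` {6..<n} \<subseteq> _\<close>]
    by (simp add: maximal_count_size_sum_H_single_hub leaves)
qed

lemma exceptional_avm_gt:
  assumes "2 \<le> m"
  shows "real (9 * m + 15) / real (3 * m + 7) < real (10 * m + 7) / real (3 * m + 4)"
proof -
  have "(9 * m + 15) * (3 * m + 4) < (10 * m + 7) * (3 * m + 7)"
    using assms by (simp add: algebra_simps)
  then have "real (9 * m + 15) * real (3 * m + 4) < real (10 * m + 7) * real (3 * m + 7)"
    by (simp only: of_nat_mult[symmetric] of_nat_less_iff)
  then show ?thesis by (simp add: divide_simps)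
qed

lemma avm_pendant_graph_cases:
  assumes hubs: "f ` {6..<n} \<subseteq> {0,1,2,3,4,5}"
    and "\<exists>i\<in>{6..<n}. f i = 2" "\<exists>i\<in>{6..<n}. f i = 3"
  shows "3 \<le> avm (pendant_graph n f)
    \<or> 2 \<le> n - 6 \<and> avm (pendant_graph n f) = real (10 * (n - 6) + 7) / real (3 * (n - 6) + 4)"
proof -
  define a where "a j = card (leaves_at {6..<n} f j)" for j
  have nonzero: "a j \<noteq> 0 \<longleftrightarrow> j \<in> f ` {6..<n}" for j
    unfolding a_def by (simp add: card_leaves_at_eq_0_iff)
  then have "{j. a j \<noteq> 0} = f ` {6..<n}" by blast
  with hubs have supp: "{j. a j \<noteq> 0} \<subseteq> {0,1,2,3,4,5}" by simp
  have a23: "a 2 \<noteq> 0" "a 3 \<noteq> 0" unfolding nonzero using assms(2,3) by force+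
  have avm: "avm (pendant_graph n f) = maximal_size_sum H_edges a / maximal_count H_edges a"
    unfolding a_def using hubs by (rule avm_pendant_graph)
  show ?thesis
  proof (cases "a 0 = 0 \<and> a 1 = 0 \<and> a 4 = 0 \<and> a 5 = 0 \<and> (a 2 = 1 \<or> a 3 = 1)")
    case True
    have "a 2 + a 3 = n - 6"
      using sum_card_leaves_at[OF _ _ hubs] True unfolding a_def by simp
    then show ?thesis
      unfolding avm using maximal_count_size_sum_H_exceptional[OF supp a23] True a23 by simp
  next
    case False
    have "0 < maximal_count H_edges a"
      unfolding maximal_count_H_bridge[OF supp a23] using triangle_count_pos by simp
    with maximal_avg_H_ge_three[OF supp a23 False] show ?thesis
      unfolding avm by (simp add: divide_simps)
  qed
qed

theorem lemma4p3:
  fixes n :: nat and f :: "nat \<Rightarrow> nat"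
  assumes "n \<ge> 7"
    and "\<forall>i\<in>{6..<n}. f i \<in> {0..5}"
    and "\<exists>i\<in>{6..<n}. f i = 2"
    and "\<exists>i\<in>{6..<n}. f i = 3"
  shows "avm (pendant_graph n f) > avm (T1_33 n)"
proof -
  have hubs: "f ` {6..<n} \<subseteq> {0,1,2,3,4,5}" using assms(2) by auto
  have "avm (T1_33 n) < 3"
    unfolding avm_T1_33[OF assms(1)] by (simp add: divide_simps)
  from avm_pendant_graph_cases[OF hubs assms(3,4)] show ?thesis
  proof
    assume "3 \<le> avm (pendant_graph n f)"
    with \<open>avm (T1_33 n) < 3\<close> show ?thesis by simp
  next
    assume "2 \<le> n - 6 \<and> avm (pendant_graph n f) = real (10 * (n - 6) + 7) / real (3 * (n - 6) + 4)"
    then show ?thesis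
      unfolding avm_T1_33[OF assms(1)] by (elim conjE) (simp only: exceptional_avm_gt)
  qed
qed

end
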